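(* With $h$ as defined in the context, for every $x\in\mathbb C$ such that neither $x$ nor $x+\frac12$ belongs to $\{-1,-2,-3,\dots\}$, \[h(x)=\frac{x+1}{x+\frac 32}\,h\left(x+\frac 12\right)h(2x).\]
   Context: Let $u_n=(-1)^{s_2(n)}$, where $s_2(n)$ is the sum of the binary digits of the non-negative integer $n$ (Thue–Morse sequence with values $\pm1$). For $b,c\in\mathbb C\setminus\{-1,-2,-3,\dots\}$ let $f(b,c)=\prod_{n=1}^\infty\left(\frac{n+b}{n+c}\right)^{u_n}$ (convergent), and define $h(x)=f\left(\frac x2,\frac{x+1}{2}\right)=\prod_{n=1}^\infty\left(\frac{2n+x}{2n+1+x}\right)^{u_n}$ for $x\in\mathbb C\setminus\{-2,-3,-4,\dots\}$. *)

theory Defs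
  imports "HOL-Analysis.Analysis"
begin

fun s2 :: "nat \<Rightarrow> nat" where
  "s2 n = (if n = 0 then 0 else n mod 2 + s2 (n div 2))"

definition u :: "nat \<Rightarrow> int" where
  "u n = (-1) ^ s2 n"

definition f :: "complex \<Rightarrow> complex \<Rightarrow> complex" where
  "f b c = (\<Prod>n. ((of_nat (Suc n) + b) / (of_nat (Suc n) + c)) powi u (Suc n))"

definition h :: "complex \<Rightarrow> complex" where
  "h x = f (x / 2) ((x + 1) / 2)"

end

theory Submission
  imports Defs "HOL-Probability.Characteristic_Functions"
begin

(* Since u (2n) = u n and u (2n+1) = - u n, the n-th factor of h x equals the n-th factor of
   h (x + 1/2) times the factors with indices 2n and 2n+1 of h (2x); this is a telescoping
   identity between four ratios. Multiplying over n >= 1 thus regroups the product h (2x) into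
   consecutive pairs, leaving only its first factor (x + 3/2) / (x + 1) unmatched. The
   regrouping is legitimate because the factors tend to 1 and, the two members of a pair
   having opposite exponents, each pair is 1 + O(1/m^2), so the paired product converges
   absolutely. *)

declare s2.simps [simp del]

lemma s2_double: "s2 (2 * m) = s2 m"
  by (cases "m = 0") (simp, subst s2.simps, simp)

lemma s2_Suc_double: "s2 (Suc (2 * m)) = Suc (s2 m)"
  by (subst s2.simps) simp

lemma u_double [simp]: "u (2 * m) = u m"
  by (simp add: u_def s2_double)

lemma u_Suc_double [simp]: "u (Suc (2 * m)) = - u m"
  by (simp add: u_def s2_Suc_double)

lemma u_Suc_0 [simp]: "u (Suc 0) = -1"
  using u_Suc_double[of 0] by (simp add: u_def s2.simps)

lemma u_eq_1_or_minus_1: "u n = 1 \<or> u n = -1"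
  by (simp add: u_def minus_one_power_iff)

lemma prod_atMost_double_Suc:
  "(\<Prod>i\<le>2 * Suc n. g i) = (\<Prod>i\<le>Suc (2 * n). g i) * (g (2 * Suc n)::'a::comm_monoid_mult)"
  by (simp add: prod.atMost_Suc[of _ "Suc (2 * n)"] del: prod.atMost_Suc)

lemma has_prod_of_pairs:
  fixes g :: "nat \<Rightarrow> 'a::real_normed_field"
  assumes nonzero: "\<And>n. g n \<noteq> 0"
    and lim: "g \<longlonglongrightarrow> 1"
    and pairs: "convergent_prod (\<lambda>m. g (2 * m) * g (Suc (2 * m)))"
  shows "g has_prod (\<Prod>m. g (2 * m) * g (Suc (2 * m)))"
proof -
  define L where "L = (\<Prod>m. g (2 * m) * g (Suc (2 * m)))"
  have "L \<noteq> 0"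
    unfolding L_def using pairs nonzero by (intro prodinf_nonzero) simp_all
  have odd: "(\<lambda>n. \<Prod>i\<le>Suc (2 * n). g i) \<longlonglongrightarrow> L"
    unfolding prod.in_pairs_0 L_def
    using pairs by (intro has_prod_imp_tendsto) (simp add: convergent_prod_has_prod)
  have "(\<lambda>n. (\<Prod>i\<le>Suc (2 * n). g i) * g (2 * Suc n)) \<longlonglongrightarrow> L * 1"
    using odd LIMSEQ_subseq_LIMSEQ[OF lim, of "\<lambda>n. 2 * Suc n"]
    by (intro tendsto_mult) (simp_all add: strict_mono_def o_def)
  then have "(\<lambda>n. \<Prod>i\<le>2 * Suc n. g i) \<longlonglongrightarrow> L"
    by (simp only: prod_atMost_double_Suc mult_1_right)
  then have even: "(\<lambda>n. \<Prod>i\<le>2 * n. g i) \<longlonglongrightarrow> L"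
    by (rule LIMSEQ_imp_Suc)
  have partial: "(\<lambda>n. \<Prod>i\<le>n. g i) \<longlonglongrightarrow> L"
    using limseq_even_odd[of "\<lambda>n. \<Prod>i\<le>n. g i", OF even] odd by simp
  moreover have "convergent_prod g"
    using partial \<open>L \<noteq> 0\<close> convergent_prod_iff_nz_lim[of g, OF nonzero] by blast
  ultimately show ?thesis
    unfolding L_def by (intro convergent_prod_tendsto_imp_has_prod)
qed

lemma LIMSEQ_of_nat_add_divide_of_nat_add:
  fixes b c :: "'a::real_normed_field"
  shows "(\<lambda>n. (of_nat n + b) / (of_nat n + c)) \<longlonglongrightarrow> 1"
proof -
  have "(\<lambda>n. (1 + b / of_nat n) / (1 + c / of_nat n)) \<longlonglongrightarrow> (1 + 0) / (1 + 0)"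
    by (intro tendsto_intros tendsto_divide_0[OF tendsto_const] tendsto_of_nat) simp_all
  moreover have "eventually (\<lambda>n. (1 + b / of_nat n) / (1 + c / of_nat n)
      = (of_nat n + b) / (of_nat n + c)) sequentially"
    using eventually_gt_at_top[of "0::nat"]
  proof eventually_elim
    case (elim n)
    then have "of_nat n \<noteq> (0::'a)"
      by simp
    then show ?case
      by (simp add: divide_simps)
  qed
  ultimately show ?thesis
    by (simp add: tendsto_cong)
qed

lemma norm_of_nat_add_ge:
  fixes z :: complex
  assumes "norm z \<le> real m + 1" and "2 * m + 2 \<le> k"
  shows "real m + 1 \<le> norm (of_nat k + z)"
proof -
  have "norm (of_nat k :: complex) - norm z \<le> norm (of_nat k + z)"
    by (rule norm_diff_ineq)
  moreover have "2 * real m + 2 \<le> real k"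
    using assms(2) by linarith
  ultimately show ?thesis
    using assms(1) by simp
qed

lemma ratio_quotient_minus_one:
  fixes X \<alpha> \<beta> :: "'a::field"
  assumes "X + \<alpha> \<noteq> 0" "X + \<beta> \<noteq> 0" "X + 1 + \<alpha> \<noteq> 0" "X + 1 + \<beta> \<noteq> 0"
  shows "(X + \<alpha>) / (X + \<beta>) / ((X + 1 + \<alpha>) / (X + 1 + \<beta>)) - 1
    = (\<alpha> - \<beta>) / ((X + \<beta>) * (X + 1 + \<alpha>))"
proof -
  have "(X + \<alpha>) / (X + \<beta>) / ((X + 1 + \<alpha>) / (X + 1 + \<beta>))
      = ((X + \<alpha>) * (X + 1 + \<beta>)) / ((X + \<beta>) * (X + 1 + \<alpha>))"
    using assms by (simp add: field_simps)
  also have "\<dots> - 1 = ((X + \<alpha>) * (X + 1 + \<beta>) - (X + \<beta>) * (X + 1 + \<alpha>)) / ((X + \<beta>) * (X + 1 + \<alpha>))"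
    using assms by (simp add: diff_divide_distrib)
  also have "(X + \<alpha>) * (X + 1 + \<beta>) - (X + \<beta>) * (X + 1 + \<alpha>) = \<alpha> - \<beta>"
    by (simp add: algebra_simps)
  finally show ?thesis .
qed

lemma divide_halves:
  fixes N y z :: "'a::field_char_0"
  shows "(N + y / 2) / (N + z / 2) = (2 * N + y) / (2 * N + z)"
proof -
  have "(N + y / 2) / (N + z / 2) = (2 * (N + y / 2)) / (2 * (N + z / 2))"
    by (rule mult_divide_mult_cancel_left[symmetric]) simp
  then show ?thesis
    by (simp add: distrib_left)
qed

lemma ratio_telescope:
  fixes p q a r :: "'a::field"
  assumes "p \<noteq> 0" and "q \<noteq> 0"
  shows "a / r = p / q * (a / p) * inverse (r / q)"
  using assms by (simp add: inverse_divide)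

definition tm_factor :: "complex \<Rightarrow> complex \<Rightarrow> nat \<Rightarrow> complex" where
  "tm_factor b c n = ((of_nat n + b) / (of_nat n + c)) powi u n"

definition tm_pair :: "complex \<Rightarrow> complex \<Rightarrow> nat \<Rightarrow> complex" where
  "tm_pair b c m = tm_factor b c (2 * m + 2) * tm_factor b c (2 * m + 3)"

lemma f_eq_prodinf_tm_factor: "f b c = (\<Prod>n. tm_factor b c (Suc n))"
  by (simp add: f_def tm_factor_def)

lemma tm_factor_nonzero: "of_nat n + b \<noteq> 0 \<Longrightarrow> of_nat n + c \<noteq> 0 \<Longrightarrow> tm_factor b c n \<noteq> 0"
  by (simp add: tm_factor_def)

lemma tm_factor_tendsto_1: "tm_factor b c \<longlonglongrightarrow> 1"
proof -
  define r where "r n = (of_nat n + b) / (of_nat n + c)" for n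
  have "r \<longlonglongrightarrow> 1"
    unfolding r_def by (rule LIMSEQ_of_nat_add_divide_of_nat_add)
  then have "(\<lambda>n. norm (r n - 1) + norm (inverse (r n) - 1))
      \<longlonglongrightarrow> norm (1 - 1 :: complex) + norm (inverse 1 - 1 :: complex)"
    by (intro tendsto_add tendsto_norm tendsto_diff tendsto_inverse tendsto_const) simp_all
  then have majorant: "(\<lambda>n. norm (r n - 1) + norm (inverse (r n) - 1)) \<longlonglongrightarrow> 0"
    by simp
  have bound: "\<forall>n. norm (tm_factor b c n - 1) \<le> norm (r n - 1) + norm (inverse (r n) - 1)"
  proof
    fix n
    show "norm (tm_factor b c n - 1) \<le> norm (r n - 1) + norm (inverse (r n) - 1)"
      using u_eq_1_or_minus_1[of n] by (auto simp: tm_factor_def simp flip: r_def)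
  qed
  have "(\<lambda>n. tm_factor b c n - 1) \<longlonglongrightarrow> 0"
    using Lim_null_comparison[OF always_eventually[OF bound] majorant] .
  then show ?thesis
    by (rule LIM_zero_cancel)
qed

lemma norm_ratio_quotient_minus_one_le:
  fixes \<alpha> \<beta> :: complex
  assumes "norm \<alpha> \<le> real m + 1" "norm \<beta> \<le> real m + 1"
  defines "X \<equiv> of_nat (2 * m + 2) :: complex"
  shows "norm ((X + \<alpha>) / (X + \<beta>) / ((X + 1 + \<alpha>) / (X + 1 + \<beta>)) - 1)
    \<le> norm (\<alpha> - \<beta>) / (real m + 1)\<^sup>2"
proof -
  have X1: "X + 1 = of_nat (2 * m + 3)"
    by (simp add: X_def)
  have ge: "real m + 1 \<le> norm (X + z)" "real m + 1 \<le> norm (X + 1 + z)"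
    if "norm z \<le> real m + 1" for z
  proof -
    show "real m + 1 \<le> norm (X + z)"
      unfolding X_def by (rule norm_of_nat_add_ge[OF that]) simp
    show "real m + 1 \<le> norm (X + 1 + z)"
      unfolding X1 by (rule norm_of_nat_add_ge[OF that]) simp
  qed
  have pos: "0 < real m + 1"
    by simp
  have denominator: "(real m + 1)\<^sup>2 \<le> norm (X + \<beta>) * norm (X + 1 + \<alpha>)"
    unfolding power2_eq_square using ge assms pos by (intro mult_mono) auto
  have "X + \<alpha> \<noteq> 0" "X + \<beta> \<noteq> 0" "X + 1 + \<alpha> \<noteq> 0" "X + 1 + \<beta> \<noteq> 0"
    using ge[OF assms(1)] ge[OF assms(2)] pos by auto
  then have "(X + \<alpha>) / (X + \<beta>) / ((X + 1 + \<alpha>) / (X + 1 + \<beta>)) - 1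
      = (\<alpha> - \<beta>) / ((X + \<beta>) * (X + 1 + \<alpha>))"
    by (rule ratio_quotient_minus_one)
  then have "norm ((X + \<alpha>) / (X + \<beta>) / ((X + 1 + \<alpha>) / (X + 1 + \<beta>)) - 1)
      = norm (\<alpha> - \<beta>) / (norm (X + \<beta>) * norm (X + 1 + \<alpha>))"
    by (simp add: norm_divide norm_mult)
  also have "\<dots> \<le> norm (\<alpha> - \<beta>) / (real m + 1)\<^sup>2"
    using denominator pos by (intro divide_left_mono mult_pos_pos) auto
  finally show ?thesis .
qed

lemma tm_pair_eq:
  fixes m :: nat
  defines "X \<equiv> of_nat (2 * m + 2) :: complex"
  shows "tm_pair b c m = ((X + b) / (X + c) / ((X + 1 + b) / (X + 1 + c))) powi u (Suc m)"
proof -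
  have "u (2 * m + 2) = u (Suc m)" "u (2 * m + 3) = - u (Suc m)"
    using u_double[of "Suc m"] u_Suc_double[of "Suc m"] by (simp_all add: numeral_3_eq_3)
  moreover have "of_nat (2 * m + 3) = X + 1"
    by (simp add: X_def)
  ultimately have "tm_pair b c m
      = ((X + b) / (X + c)) powi u (Suc m) * ((X + 1 + b) / (X + 1 + c)) powi (- u (Suc m))"
    unfolding tm_pair_def tm_factor_def X_def[symmetric] by (simp only:)
  then show ?thesis
    by (simp add: power_int_minus power_int_mult_distrib power_int_inverse divide_inverse)
qed

lemma norm_tm_pair_minus_one_le:
  assumes "norm b \<le> real m + 1" "norm c \<le> real m + 1"
  shows "norm (tm_pair b c m - 1) \<le> norm (b - c) / (real m + 1)\<^sup>2"
proof (cases "u (Suc m) = 1")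
  case True
  then show ?thesis
    using norm_ratio_quotient_minus_one_le[OF assms] by (simp add: tm_pair_eq)
next
  case False
  then have "u (Suc m) = -1"
    using u_eq_1_or_minus_1 by blast
  then show ?thesis
    using norm_ratio_quotient_minus_one_le[OF assms(2,1)]
    by (simp add: tm_pair_eq power_int_minus norm_minus_commute)
qed

lemma summable_norm_tm_pair_minus_one: "summable (\<lambda>m. norm (tm_pair b c m - 1))"
proof -
  obtain M :: nat where M: "max (norm b) (norm c) \<le> real M"
    using real_arch_simple by blast
  have "summable (\<lambda>m. inverse (real m ^ 2))"
    by (rule inverse_power_summable) simp
  then have "summable (\<lambda>m. inverse (real (Suc m) ^ 2))"
    by (subst summable_Suc_iff)
  then have "summable (\<lambda>m. norm (b - c) * inverse (real (Suc m) ^ 2))"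
    by (rule summable_mult)
  moreover have "eventually (\<lambda>m. norm (norm (tm_pair b c m - 1))
      \<le> norm (b - c) * inverse (real (Suc m) ^ 2)) sequentially"
    using eventually_ge_at_top[of M]
  proof eventually_elim
    case (elim m)
    then have "norm b \<le> real m + 1" "norm c \<le> real m + 1"
      using M by auto
    then show ?case
      using norm_tm_pair_minus_one_le by (simp add: divide_inverse add.commute)
  qed
  ultimately show ?thesis
    by (rule summable_comparison_test_ev[rotated])
qed

lemma convergent_prod_tm_pair: "convergent_prod (tm_pair b c)"
  by (intro abs_convergent_prod_imp_convergent_prod summable_imp_abs_convergent_prod
      summable_norm_tm_pair_minus_one)

lemma has_prod_tm_factor:
  assumes "\<And>n. n \<ge> 1 \<Longrightarrow> of_nat n + b \<noteq> 0" and "\<And>n. n \<ge> 1 \<Longrightarrow> of_nat n + c \<noteq> 0"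
  shows "(\<lambda>n. tm_factor b c (Suc n)) has_prod (tm_factor b c 1 * (\<Prod>m. tm_pair b c m))"
proof -
  have nonzero: "tm_factor b c (Suc n) \<noteq> 0" for n
    using tm_factor_nonzero[OF assms(1)[of "Suc n"] assms(2)[of "Suc n"]] by simp
  have "(\<lambda>m. tm_factor b c (Suc (Suc (2 * m))) * tm_factor b c (Suc (Suc (Suc (2 * m)))))
      = tm_pair b c"
    by (simp add: fun_eq_iff tm_pair_def numeral_3_eq_3)
  then have "(\<lambda>n. tm_factor b c (Suc (Suc n))) has_prod (\<Prod>m. tm_pair b c m)"
    using has_prod_of_pairs[of "\<lambda>n. tm_factor b c (Suc (Suc n))"] nonzero convergent_prod_tm_pair
      LIMSEQ_ignore_initial_segment[OF tm_factor_tendsto_1, of b c 2]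
    by simp
  then show ?thesis
    using has_prod_Suc_iff[of "\<lambda>n. tm_factor b c (Suc n)"] nonzero[of 0] by (simp add: mult.commute)
qed

lemma f_eq_tm_factor_mult_prodinf_tm_pair:
  assumes "\<And>n. n \<ge> 1 \<Longrightarrow> of_nat n + b \<noteq> 0" and "\<And>n. n \<ge> 1 \<Longrightarrow> of_nat n + c \<noteq> 0"
  shows "f b c = tm_factor b c 1 * (\<Prod>m. tm_pair b c m)"
proof -
  have "(\<lambda>n. tm_factor b c (Suc n)) has_prod (tm_factor b c 1 * (\<Prod>m. tm_pair b c m))"
    using assms by (rule has_prod_tm_factor)
  then show ?thesis
    unfolding f_eq_prodinf_tm_factor by (simp add: has_prod_iff)
qed

lemma tm_factor_duplication:
  fixes x :: complex
  assumes "of_nat (2 * n) + (x + 1/2) \<noteq> 0" and "of_nat (2 * n + 1) + (x + 1/2) \<noteq> 0"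
  shows "tm_factor (x / 2) ((x + 1) / 2) n
    = tm_factor ((x + 1/2) / 2) ((x + 1/2 + 1) / 2) n
      * tm_factor x (x + 1/2) (2 * n) * tm_factor x (x + 1/2) (2 * n + 1)"
proof -
  define A where "A = of_nat (2 * n) + x"
  have "(of_nat n + x / 2) / (of_nat n + (x + 1) / 2) = A / (A + 1)"
    "(of_nat n + (x + 1/2) / 2) / (of_nat n + (x + 1/2 + 1) / 2) = (A + 1/2) / (A + 3/2)"
    "(of_nat (2 * n) + x) / (of_nat (2 * n) + (x + 1/2)) = A / (A + 1/2)"
    "(of_nat (2 * n + 1) + x) / (of_nat (2 * n + 1) + (x + 1/2)) = (A + 1) / (A + 3/2)"
    by (simp_all add: A_def divide_halves algebra_simps)
  moreover have "A / (A + 1) = (A + 1/2) / (A + 3/2) * (A / (A + 1/2)) * inverse ((A + 1) / (A + 3/2))"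
    using assms by (intro ratio_telescope) (simp_all add: A_def algebra_simps)
  moreover have "u (2 * n + 1) = - u n"
    by simp
  ultimately show ?thesis
    unfolding tm_factor_def u_double
    by (simp only: power_int_minus power_int_mult_distrib power_int_inverse)
qed

lemma h_eq_prodinf_tm_factor: "h y = (\<Prod>n. tm_factor (y / 2) ((y + 1) / 2) (Suc n))"
  by (simp add: h_def f_eq_prodinf_tm_factor)

lemma of_nat_add_half_nonzero:
  fixes y :: complex
  assumes "\<And>k. k \<ge> 1 \<Longrightarrow> of_nat k + y \<noteq> 0" and "n \<ge> 1"
  shows "of_nat n + y / 2 \<noteq> 0" and "of_nat n + (y + 1) / 2 \<noteq> 0"
proof -
  have "of_nat (2 * n) + y \<noteq> 0" "of_nat (2 * n + 1) + y \<noteq> 0"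
    using assms(2) by (intro assms(1); simp)+
  then show "of_nat n + y / 2 \<noteq> 0" "of_nat n + (y + 1) / 2 \<noteq> 0"
    by (simp_all add: field_simps)
qed

lemma convergent_prod_h_factors:
  fixes y :: complex
  assumes "\<And>k. k \<ge> 1 \<Longrightarrow> of_nat k + y \<noteq> 0"
  shows "convergent_prod (\<lambda>n. tm_factor (y / 2) ((y + 1) / 2) (Suc n))"
  using has_prod_tm_factor[of "y / 2" "(y + 1) / 2"] of_nat_add_half_nonzero[OF assms]
  by (auto simp: has_prod_iff)

lemma tm_factor_Suc_eq_mult_tm_pair:
  fixes x :: complex
  assumes "\<And>k. k \<ge> 1 \<Longrightarrow> of_nat k + (x + 1/2) \<noteq> 0"
  shows "tm_factor (x / 2) ((x + 1) / 2) (Suc n)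
    = tm_factor ((x + 1/2) / 2) ((x + 1/2 + 1) / 2) (Suc n) * tm_pair x (x + 1/2) n"
proof -
  have "tm_factor (x / 2) ((x + 1) / 2) (Suc n)
      = tm_factor ((x + 1/2) / 2) ((x + 1/2 + 1) / 2) (Suc n)
        * tm_factor x (x + 1/2) (2 * Suc n) * tm_factor x (x + 1/2) (2 * Suc n + 1)"
    by (rule tm_factor_duplication; rule assms; simp)
  then show ?thesis
    by (simp add: tm_pair_def mult.assoc numeral_3_eq_3)
qed

lemma tm_factor_one: "tm_factor b c 1 = (1 + c) / (1 + b)"
  by (simp add: tm_factor_def power_int_minus)

lemma h_double_eq_prodinf_tm_pair:
  fixes x :: complex
  assumes "\<And>k. k \<ge> 1 \<Longrightarrow> of_nat k + x \<noteq> 0" and "\<And>k. k \<ge> 1 \<Longrightarrow> of_nat k + (x + 1/2) \<noteq> 0"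
  shows "h (2 * x) = (x + 3/2) / (x + 1) * (\<Prod>n. tm_pair x (x + 1/2) n)"
proof -
  have "h (2 * x) = f x (x + 1/2)"
    by (simp add: h_def add_divide_distrib)
  also have "\<dots> = tm_factor x (x + 1/2) 1 * (\<Prod>n. tm_pair x (x + 1/2) n)"
    using assms by (rule f_eq_tm_factor_mult_prodinf_tm_pair)
  finally show ?thesis
    unfolding tm_factor_one by (simp add: add_ac)
qed

theorem lemma4:
  fixes x :: complex
  assumes "\<forall>k::nat. k \<ge> 1 \<longrightarrow> x \<noteq> - of_nat k"
      and "\<forall>k::nat. k \<ge> 1 \<longrightarrow> x + 1/2 \<noteq> - of_nat k"
  shows "h x = (x + 1) / (x + 3/2) * h (x + 1/2) * h (2 * x)"
proof -
  have nz: "of_nat k + x \<noteq> 0" "of_nat k + (x + 1/2) \<noteq> 0" if "k \<ge> 1" for k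
    using assms that by (auto simp: add_eq_0_iff)
  have "x + 1 \<noteq> 0" "x + 3/2 \<noteq> 0"
    using nz[of 1] by (simp_all add: field_simps)
  have double: "h (2 * x) = (x + 3/2) / (x + 1) * (\<Prod>n. tm_pair x (x + 1/2) n)"
    using nz by (rule h_double_eq_prodinf_tm_pair)
  have "h x
      = (\<Prod>n. tm_factor ((x + 1/2) / 2) ((x + 1/2 + 1) / 2) (Suc n) * tm_pair x (x + 1/2) n)"
    by (simp only: h_eq_prodinf_tm_factor tm_factor_Suc_eq_mult_tm_pair[OF nz(2)])
  also have "\<dots> = h (x + 1/2) * (\<Prod>n. tm_pair x (x + 1/2) n)"
    unfolding h_eq_prodinf_tm_factor
    using nz(2) by (intro prodinf_mult[symmetric] convergent_prod_h_factors convergent_prod_tm_pair)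
  also have "\<dots>
      = (x + 1) / (x + 3/2) * h (x + 1/2) * ((x + 3/2) / (x + 1) * (\<Prod>n. tm_pair x (x + 1/2) n))"
    using \<open>x + 1 \<noteq> 0\<close> \<open>x + 3/2 \<noteq> 0\<close> by simp
  also have "\<dots> = (x + 1) / (x + 3/2) * h (x + 1/2) * h (2 * x)"
    by (simp only: double)
  finally show ?thesis .
qed

end
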